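(* For $m\ge3$, no single contraction of the Lie algebra $\mathfrak{po}(m)$ yields a Lie algebra isomorphic to $\mathfrak{po}((1),\dots,(1))$ ($m$ copies of $(1)$).
   Context: $\mathfrak{po}(m)$ is the Lie algebra of the image $\mathrm{PO}(m)$ of $\mathrm{O}(m)$ in $\mathrm{PGL}_m\mathbb{R}$ (isomorphic to $\mathfrak{so}(m)$). $\mathfrak{po}((1),\dots,(1))$ is the Lie algebra of the image in $\mathrm{PGL}_m\mathbb{R}$ of the group of lower-triangular real matrices with diagonal entries $\pm1$; it is isomorphic to the Lie algebra of strictly lower-triangular real $m\times m$ matrices. Contraction: for a Lie algebra $\mathfrak{h}$, a Lie subalgebra $\mathfrak{t}$ with complementary subspace $\mathfrak{t}^c$ and $\phi_\varepsilon(X)=X_{\mathfrak{t}}+\varepsilon X_{\mathfrak{t}^c}$ ($\varepsilon>0$), the contraction along $\mathfrak{t}$ is the vector space of $\mathfrak{h}$ with bracket $[X,Y]'=\lim_{\varepsilon\to0}\phi_\varepsilon^{-1}([\phi_\varepsilon(X),\phi_\varepsilon(Y)])$. *)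

theory Defs
  imports "HOL-Analysis.Analysis"
begin

definition commutator :: "real^'n^'n \<Rightarrow> real^'n^'n \<Rightarrow> real^'n^'n" where
  "commutator A B = A ** B - B ** A"

text \<open>so(m), isomorphic to po(m): skew-symmetric matrices.\<close>
definition so_alg :: "(real^'n^'n) set" where
  "so_alg = {A. transpose A = - A}"

text \<open>Strictly lower-triangular matrices, isomorphic to po((1),...,(1)).\<close>
definition slt_alg :: "(real^('n::{finite,linorder})^('n::{finite,linorder})) set" where
  "slt_alg = {A. \<forall>i j. j \<ge> i \<longrightarrow> A $ i $ j = 0}"

definition lie_subalgebra :: "(real^'n^'n) set \<Rightarrow> (real^'n^'n) set \<Rightarrow> bool" where
  "lie_subalgebra t h \<longleftrightarrow> subspace t \<and> t \<subseteq> h \<and>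
     (\<forall>X\<in>t. \<forall>Y\<in>t. commutator X Y \<in> t)"

definition complement_in :: "(real^'n^'n) set \<Rightarrow> (real^'n^'n) set \<Rightarrow> (real^'n^'n) set \<Rightarrow> bool" where
  "complement_in tc t h \<longleftrightarrow> subspace tc \<and> tc \<subseteq> h \<and> t \<inter> tc = {0} \<and>
     (\<forall>X\<in>h. \<exists>a\<in>t. \<exists>b\<in>tc. X = a + b)"

definition proj_along :: "(real^'n^'n) set \<Rightarrow> (real^'n^'n) set \<Rightarrow> real^'n^'n \<Rightarrow> real^'n^'n" where
  "proj_along t tc X = (THE a. a \<in> t \<and> X - a \<in> tc)"

definition contr_phi :: "(real^'n^'n) set \<Rightarrow> (real^'n^'n) set \<Rightarrow> real \<Rightarrow> real^'n^'n \<Rightarrow> real^'n^'n" where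
  "contr_phi t tc \<epsilon> X = proj_along t tc X + \<epsilon> *\<^sub>R (X - proj_along t tc X)"

definition contr_phi_inv :: "(real^'n^'n) set \<Rightarrow> (real^'n^'n) set \<Rightarrow> real \<Rightarrow> real^'n^'n \<Rightarrow> real^'n^'n" where
  "contr_phi_inv t tc \<epsilon> Z = proj_along t tc Z + (1 / \<epsilon>) *\<^sub>R (Z - proj_along t tc Z)"

definition is_contraction_bracket ::
  "(real^'n^'n) set \<Rightarrow> (real^'n^'n) set \<Rightarrow> (real^'n^'n) set \<Rightarrow>
   (real^'n^'n \<Rightarrow> real^'n^'n \<Rightarrow> real^'n^'n) \<Rightarrow> bool" where
  "is_contraction_bracket h t tc br \<longleftrightarrow>
     (\<forall>X\<in>h. \<forall>Y\<in>h.
        ((\<lambda>\<epsilon>. contr_phi_inv t tc \<epsilon> (commutator (contr_phi t tc \<epsilon> X) (contr_phi t tc \<epsilon> Y)))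
          \<longlongrightarrow> br X Y) (at_right 0))"

definition lie_iso_onto ::
  "(real^'n^'n) set \<Rightarrow> (real^'n^'n \<Rightarrow> real^'n^'n \<Rightarrow> real^'n^'n) \<Rightarrow> (real^'n^'n) set \<Rightarrow>
   (real^'n^'n \<Rightarrow> real^'n^'n) \<Rightarrow> bool" where
  "lie_iso_onto h br g f \<longleftrightarrow>
     (\<forall>a b X Y. X \<in> h \<longrightarrow> Y \<in> h \<longrightarrow> f (a *\<^sub>R X + b *\<^sub>R Y) = a *\<^sub>R f X + b *\<^sub>R f Y) \<and>
     inj_on f h \<and> f ` h = g \<and>
     (\<forall>X\<in>h. \<forall>Y\<in>h. f (br X Y) = commutator (f X) (f Y))"

end

(*
  Suppose the contraction of so(m) along t were isomorphic to the Lie algebra of strictly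
  lower-triangular m x m matrices, which is nilpotent. For X in t the contracted bracket
  [X, -]' acts as ad X on t and as the tc-component of ad X on tc: relative to the splitting
  so(m) = t + tc it is the block diagonal of the block-triangular map ad X. Nilpotency of
  [X, -]' therefore forces ad X to be nilpotent on so(m). But ad X is skew-adjoint for the
  trace form, so it vanishes, and since so(m) has trivial centre for m >= 3, X = 0. Hence
  t = 0 and the contraction is abelian, whereas the strictly lower-triangular matrices are
  not abelian for m >= 3.
*)
theory Submission
  imports Defs
begin

lemma matrix_add_rdistrib: "(A + B) ** C = A ** C + B ** C"
  by (vector matrix_matrix_mult_def sum.distrib[symmetric] field_simps)

lemma matrix_diff_ldistrib: "(A :: 'a::ring_1^'n^'m) ** (B - C) = A ** B - A ** C"
  by (vector matrix_matrix_mult_def sum_subtractf[symmetric] algebra_simps)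

lemma matrix_diff_rdistrib: "((A :: 'a::ring_1^'n^'m) - B) ** C = A ** C - B ** C"
  by (vector matrix_matrix_mult_def sum_subtractf[symmetric] algebra_simps)

lemma matrix_mul_uminus_left: "(- A :: 'a::ring_1^'n^'m) ** B = - (A ** B)"
  by (vector matrix_matrix_mult_def sum_negf[symmetric])

lemma matrix_mul_uminus_right: "(A :: 'a::ring_1^'n^'m) ** (- B) = - (A ** B)"
  by (vector matrix_matrix_mult_def sum_negf[symmetric])

lemma trace_uminus: "trace (- A :: 'a::ring_1^'n^'n) = - trace A"
  by (simp add: trace_def sum_negf)

lemma transpose_zero: "transpose 0 = 0"
  by (simp add: transpose_def vec_eq_iff)

lemma transpose_add: "transpose (A + B) = transpose A + transpose B"
  by (simp add: transpose_def vec_eq_iff)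

lemma transpose_diff: "transpose (A - B) = transpose A - transpose B"
  by (simp add: transpose_def vec_eq_iff)

lemma inner_matrix_eq_trace: "inner A B = trace (transpose A ** (B :: real^'n^'m))"
  unfolding inner_vec_def trace_def matrix_matrix_mult_def transpose_def
  by (simp add: mult.commute) (rule sum.swap)

lemma commutator_add_left: "commutator (A + B) C = commutator A C + commutator B C"
  by (simp add: commutator_def matrix_add_ldistrib matrix_add_rdistrib)

lemma commutator_add_right: "commutator A (B + C) = commutator A B + commutator A C"
  by (simp add: commutator_def matrix_add_ldistrib matrix_add_rdistrib)

lemma commutator_diff_right: "commutator A (B - C) = commutator A B - commutator A C"
  by (simp add: commutator_def matrix_diff_ldistrib matrix_diff_rdistrib)

lemma commutator_scaleR_left: "commutator (c *\<^sub>R A) B = c *\<^sub>R commutator A B"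
  by (simp add: commutator_def matrix_scalar_ac scalar_matrix_assoc[symmetric] scaleR_diff_right)

lemma commutator_scaleR_right: "commutator A (c *\<^sub>R B) = c *\<^sub>R commutator A B"
  by (simp add: commutator_def matrix_scalar_ac scalar_matrix_assoc[symmetric] scaleR_diff_right)

lemma commutator_0_left [simp]: "commutator 0 A = 0"
  by (simp add: commutator_def)

lemma commutator_0_right [simp]: "commutator A 0 = 0"
  by (simp add: commutator_def)

lemma lie_subalgebraD:
  assumes "lie_subalgebra t h"
  shows "subspace t" and "t \<subseteq> h"
    and "\<And>A B. A \<in> t \<Longrightarrow> B \<in> t \<Longrightarrow> commutator A B \<in> t"
  using assms by (auto simp: lie_subalgebra_def)

lemma lie_subalgebra_so_alg: "lie_subalgebra so_alg UNIV"
proof -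
  have "subspace so_alg"
    unfolding subspace_def so_alg_def by (simp add: transpose_add transpose_zero transpose_scalar)
  moreover have "commutator A B \<in> so_alg" if "A \<in> so_alg" "B \<in> so_alg" for A B
    using that
    by (simp add: so_alg_def commutator_def transpose_diff matrix_transpose_mul
        matrix_mul_uminus_left matrix_mul_uminus_right)
  ultimately show ?thesis by (auto simp: lie_subalgebra_def)
qed

lemma inner_commutator_skew:
  assumes "transpose X = - X"
  shows "inner (commutator X A) B = - inner A (commutator X (B :: real^'n^'n))"
proof -
  have "inner (commutator X A) B = trace (X ** (transpose A ** B)) - trace (transpose A ** X ** B)"
    by (simp add: inner_matrix_eq_trace commutator_def transpose_diff matrix_transpose_mul assms
        matrix_diff_rdistrib trace_sub matrix_mul_assoc matrix_mul_uminus_left matrix_mul_uminus_right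
        trace_uminus)
  also have "trace (X ** (transpose A ** B)) = trace (transpose A ** B ** X)"
    by (rule trace_mul_sym)
  also have "trace (transpose A ** B ** X) - trace (transpose A ** X ** B) = - inner A (commutator X B)"
    by (simp add: inner_matrix_eq_trace commutator_def matrix_diff_ldistrib trace_sub matrix_mul_assoc)
  finally show ?thesis .
qed

lemma proj_along_eq:
  assumes t: "subspace t" and c: "complement_in tc t h" and "a \<in> t" "b \<in> tc"
  shows "proj_along t tc (a + b) = a"
  unfolding proj_along_def
proof (rule the_equality)
  show "a \<in> t \<and> a + b - a \<in> tc" using assms by simp
next
  fix a' assume a': "a' \<in> t \<and> a + b - a' \<in> tc"
  have "subspace tc" using c by (simp add: complement_in_def)
  then have "a - a' \<in> tc"
    using a' \<open>b \<in> tc\<close> subspace_diff[of tc "a + b - a'" b] by simp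
  moreover have "a - a' \<in> t" using t a' \<open>a \<in> t\<close> by (simp add: subspace_diff)
  ultimately have "a - a' \<in> t \<inter> tc" by simp
  then have "a - a' = 0" using c unfolding complement_in_def by blast
  then show "a' = a" by simp
qed

lemma proj_along_in:
  assumes t: "subspace t" and c: "complement_in tc t h" and "X \<in> h"
  shows "proj_along t tc X \<in> t" and "X - proj_along t tc X \<in> tc"
proof -
  obtain a b where "a \<in> t" "b \<in> tc" "X = a + b"
    using c \<open>X \<in> h\<close> by (auto simp: complement_in_def)
  then show "proj_along t tc X \<in> t" and "X - proj_along t tc X \<in> tc"
    using proj_along_eq[OF t c] by simp_all
qed

lemma proj_along_id:
  assumes "subspace t" and c: "complement_in tc t h" and "X \<in> t"
  shows "proj_along t tc X = X"
proof -
  have "0 \<in> tc" using c by (auto simp: complement_in_def subspace_0)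
  then show ?thesis using proj_along_eq[OF assms, of 0] by simp
qed

lemma proj_along_add:
  assumes t: "subspace t" and c: "complement_in tc t h" and "X \<in> h" "Y \<in> h"
  shows "proj_along t tc (X + Y) = proj_along t tc X + proj_along t tc Y"
proof -
  let ?P = "proj_along t tc"
  have "subspace tc" using c by (simp add: complement_in_def)
  then have "(X - ?P X) + (Y - ?P Y) \<in> tc"
    using proj_along_in[OF t c] assms by (simp add: subspace_add)
  moreover have "?P X + ?P Y \<in> t"
    using proj_along_in[OF t c] assms by (simp add: subspace_add)
  moreover have "X + Y = (?P X + ?P Y) + ((X - ?P X) + (Y - ?P Y))" by simp
  ultimately show ?thesis using proj_along_eq[OF t c] by metis
qed

text \<open>The bracket of the contraction: in \<open>\<phi>\<^sub>\<epsilon>\<^sup>-\<^sup>1 [\<phi>\<^sub>\<epsilon> X, \<phi>\<^sub>\<epsilon> Y]\<close> the term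
  \<open>[X\<^sub>c, Y\<^sub>c]\<close> between the \<open>tc\<close>-components carries a factor \<open>\<epsilon>\<close> and vanishes in the limit,
  and of the mixed terms only their \<open>tc\<close>-component survives.\<close>

definition contracted_commutator ::
  "(real^'n^'n) set \<Rightarrow> (real^'n^'n) set \<Rightarrow> real^'n^'n \<Rightarrow> real^'n^'n \<Rightarrow> real^'n^'n" where
  "contracted_commutator t tc X Y =
     (let P = proj_along t tc;
          M = commutator (P X) (Y - P Y) + commutator (X - P X) (P Y)
      in commutator (P X) (P Y) + (M - P M))"

lemma commutator_contr_phi:
  fixes X Y :: "real^'n^'n" and t tc :: "(real^'n^'n) set"
  defines "P \<equiv> proj_along t tc"
  shows "commutator (contr_phi t tc e X) (contr_phi t tc e Y) =
    commutator (P X) (P Y) + e *\<^sub>R (commutator (P X) (Y - P Y) + commutator (X - P X) (P Y))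
      + e\<^sup>2 *\<^sub>R commutator (X - P X) (Y - P Y)"
  unfolding contr_phi_def P_def
  by (simp only: commutator_add_left commutator_add_right commutator_scaleR_left
      commutator_scaleR_right) (simp add: algebra_simps power2_eq_square)

lemma contr_phi_inv_add:
  assumes "subspace t" and "complement_in tc t h" and "a \<in> t" "b \<in> tc"
  shows "contr_phi_inv t tc e (a + b) = a + (1 / e) *\<^sub>R b"
  by (simp add: contr_phi_inv_def proj_along_eq[OF assms])

lemma contraction_bracket_eq:
  assumes h: "lie_subalgebra h UNIV" and t: "lie_subalgebra t h" and c: "complement_in tc t h"
    and br: "is_contraction_bracket h t tc br" and "X \<in> h" "Y \<in> h"
  shows "br X Y = contracted_commutator t tc X Y"
proof -
  let ?P = "proj_along t tc"
  define a where "a = commutator (?P X) (?P Y)"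
  define M where "M = commutator (?P X) (Y - ?P Y) + commutator (X - ?P X) (?P Y)"
  define C where "C = commutator (X - ?P X) (Y - ?P Y)"
  note sh = lie_subalgebraD(1)[OF h] and hcl = lie_subalgebraD(3)[OF h]
  note st = lie_subalgebraD(1)[OF t] and th = lie_subalgebraD(2)[OF t]
    and tcl = lie_subalgebraD(3)[OF t]
  have stc: "subspace tc" and "tc \<subseteq> h" using c by (auto simp: complement_in_def)
  have PX: "?P X \<in> t" "X - ?P X \<in> tc" and PY: "?P Y \<in> t" "Y - ?P Y \<in> tc"
    using proj_along_in[OF st c] \<open>X \<in> h\<close> \<open>Y \<in> h\<close> by auto
  have "a \<in> t" unfolding a_def using tcl PX PY by blast
  have "?P X \<in> h" "X - ?P X \<in> h" "?P Y \<in> h" "Y - ?P Y \<in> h"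
    using PX PY th \<open>tc \<subseteq> h\<close> by auto
  then have "M \<in> h" "C \<in> h" unfolding M_def C_def by (simp_all add: hcl subspace_add[OF sh])
  then have PM: "?P M \<in> t" "M - ?P M \<in> tc" and PC: "?P C \<in> t" "C - ?P C \<in> tc"
    using proj_along_in[OF st c] by auto
  have phi_inv_eq: "contr_phi_inv t tc e (commutator (contr_phi t tc e X) (contr_phi t tc e Y))
      = (a + (M - ?P M)) + e *\<^sub>R (?P M + (C - ?P C)) + e\<^sup>2 *\<^sub>R ?P C" if "e > 0" for e
  proof -
    define A where "A = a + e *\<^sub>R ?P M + e\<^sup>2 *\<^sub>R ?P C"
    define B where "B = e *\<^sub>R (M - ?P M) + e\<^sup>2 *\<^sub>R (C - ?P C)"
    have "A \<in> t" unfolding A_def using \<open>a \<in> t\<close> PM PC st by (simp add: subspace_add subspace_scale)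
    moreover have "B \<in> tc" unfolding B_def using PM PC stc by (simp add: subspace_add subspace_scale)
    moreover have "commutator (contr_phi t tc e X) (contr_phi t tc e Y) = A + B"
      using commutator_contr_phi[of t tc e X Y, folded a_def M_def C_def]
      by (simp add: A_def B_def algebra_simps)
    ultimately have "contr_phi_inv t tc e (commutator (contr_phi t tc e X) (contr_phi t tc e Y))
        = A + (1 / e) *\<^sub>R B"
      using contr_phi_inv_add[OF st c] by simp
    then show ?thesis
      using \<open>e > 0\<close> by (simp add: A_def B_def algebra_simps power2_eq_square)
  qed
  have "((\<lambda>e. (a + (M - ?P M)) + e *\<^sub>R (?P M + (C - ?P C)) + e\<^sup>2 *\<^sub>R ?P C)
      \<longlongrightarrow> a + (M - ?P M)) (at_right (0::real))"
    by (auto intro!: tendsto_eq_intros)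
  then have "((\<lambda>e. contr_phi_inv t tc e (commutator (contr_phi t tc e X) (contr_phi t tc e Y)))
      \<longlongrightarrow> a + (M - ?P M)) (at_right 0)"
    by (rule Lim_transform_eventually) (simp add: phi_inv_eq eventually_mono[OF eventually_at_right_less])
  moreover have "((\<lambda>e. contr_phi_inv t tc e (commutator (contr_phi t tc e X) (contr_phi t tc e Y)))
      \<longlongrightarrow> br X Y) (at_right 0)"
    using br \<open>X \<in> h\<close> \<open>Y \<in> h\<close> by (simp add: is_contraction_bracket_def)
  ultimately have "br X Y = a + (M - ?P M)"
    using tendsto_unique trivial_limit_at_right_real by blast
  then show ?thesis by (simp add: contracted_commutator_def Let_def a_def M_def)
qed

lemma contracted_commutator_mem:
  assumes h: "lie_subalgebra h UNIV" and t: "lie_subalgebra t h" and c: "complement_in tc t h"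
    and "X \<in> h" "Y \<in> h"
  shows "contracted_commutator t tc X Y \<in> h"
proof -
  let ?P = "proj_along t tc"
  note sh = lie_subalgebraD(1)[OF h] and hcl = lie_subalgebraD(3)[OF h]
  note st = lie_subalgebraD(1)[OF t] and th = lie_subalgebraD(2)[OF t]
  have P_in: "?P Z \<in> h" "Z - ?P Z \<in> h" if "Z \<in> h" for Z
    using proj_along_in[OF st c that] th c that by (auto simp: complement_in_def)
  define M where "M = commutator (?P X) (Y - ?P Y) + commutator (X - ?P X) (?P Y)"
  have "M \<in> h" unfolding M_def using P_in \<open>X \<in> h\<close> \<open>Y \<in> h\<close> by (simp add: hcl subspace_add[OF sh])
  then show ?thesis
    unfolding contracted_commutator_def Let_def M_def[symmetric]
    using P_in \<open>X \<in> h\<close> \<open>Y \<in> h\<close> by (simp add: hcl subspace_add[OF sh])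
qed

lemma contracted_commutator_trivial:
  assumes "complement_in tc {0} h" and "X \<in> h" "Y \<in> h"
  shows "contracted_commutator {0} tc X Y = 0"
proof -
  have "proj_along {0} tc Z = 0" if "Z \<in> h" for Z
    using proj_along_in(1)[OF subspace_single_0 assms(1) that] by simp
  moreover have "0 \<in> h" using assms(1) by (auto simp: complement_in_def)
  ultimately show ?thesis using assms by (simp add: contracted_commutator_def)
qed

lemma proj_along_commutator_residual:
  assumes h: "lie_subalgebra h UNIV" and t: "lie_subalgebra t h" and c: "complement_in tc t h"
    and "X \<in> t" "Z \<in> h"
  defines "Q \<equiv> \<lambda>W. W - proj_along t tc W"
  shows "Q (commutator X Z) = Q (commutator X (Q Z))"
proof -
  let ?P = "proj_along t tc"
  note hcl = lie_subalgebraD(3)[OF h]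
  note st = lie_subalgebraD(1)[OF t] and th = lie_subalgebraD(2)[OF t]
    and tcl = lie_subalgebraD(3)[OF t]
  have "?P Z \<in> t" "Q Z \<in> tc" using proj_along_in[OF st c \<open>Z \<in> h\<close>] by (simp_all add: Q_def)
  then have "commutator X (?P Z) \<in> t" "commutator X (Q Z) \<in> h"
    using \<open>X \<in> t\<close> tcl th hcl c unfolding complement_in_def by blast+
  moreover have "commutator X Z = commutator X (?P Z) + commutator X (Q Z)"
    by (simp add: Q_def commutator_diff_right)
  ultimately show ?thesis
    using proj_along_add[OF st c] proj_along_id[OF st c] th by (auto simp: Q_def)
qed

lemma contracted_commutator_subalgebra_left:
  assumes h: "lie_subalgebra h UNIV" and t: "lie_subalgebra t h" and c: "complement_in tc t h"
    and "X \<in> t" "Y \<in> h"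
  defines "P \<equiv> proj_along t tc"
  shows "P (contracted_commutator t tc X Y) = commutator X (P Y)"
    and "contracted_commutator t tc X Y - P (contracted_commutator t tc X Y)
           = commutator X Y - P (commutator X Y)"
proof -
  note hcl = lie_subalgebraD(3)[OF h]
  note st = lie_subalgebraD(1)[OF t] and th = lie_subalgebraD(2)[OF t]
    and tcl = lie_subalgebraD(3)[OF t]
  define M where "M = commutator X (Y - P Y)"
  have "P Y \<in> t" "Y - P Y \<in> tc" using proj_along_in[OF st c \<open>Y \<in> h\<close>] by (simp_all add: P_def)
  then have "commutator X (P Y) \<in> t" "M \<in> h"
    using \<open>X \<in> t\<close> tcl th hcl c unfolding M_def complement_in_def by blast+
  then have "M - P M \<in> tc" using proj_along_in(2)[OF st c] by (simp add: P_def)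
  moreover have cc: "contracted_commutator t tc X Y = commutator X (P Y) + (M - P M)"
    using proj_along_id[OF st c \<open>X \<in> t\<close>] by (simp add: contracted_commutator_def Let_def P_def M_def)
  ultimately have "P (contracted_commutator t tc X Y) = commutator X (P Y)"
    using proj_along_eq[OF st c \<open>commutator X (P Y) \<in> t\<close>] by (simp add: P_def)
  moreover have "commutator X Y - P (commutator X Y) = M - P M"
    using proj_along_commutator_residual[OF h t c \<open>X \<in> t\<close> \<open>Y \<in> h\<close>] by (simp add: P_def M_def)
  ultimately show "P (contracted_commutator t tc X Y) = commutator X (P Y)"
    and "contracted_commutator t tc X Y - P (contracted_commutator t tc X Y)
           = commutator X Y - P (commutator X Y)"
    using cc by simp_all
qed

lemma contraction_bracket_mem:
  assumes h: "lie_subalgebra h UNIV" and t: "lie_subalgebra t h" and c: "complement_in tc t h"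
    and br: "is_contraction_bracket h t tc br" and "X \<in> h" "Y \<in> h"
  shows "br X Y \<in> h"
  using contraction_bracket_eq[OF assms] contracted_commutator_mem[OF h t c] assms by simp

lemma funpow_mem:
  assumes "\<And>Z. Z \<in> h \<Longrightarrow> F Z \<in> h" and "Y \<in> h"
  shows "(F ^^ k) Y \<in> h"
  by (induction k) (simp_all add: assms)

lemma proj_along_funpow_contraction_bracket:
  assumes h: "lie_subalgebra h UNIV" and t: "lie_subalgebra t h" and c: "complement_in tc t h"
    and br: "is_contraction_bracket h t tc br" and "X \<in> t" "Y \<in> h"
  defines "P \<equiv> proj_along t tc"
  shows "P ((br X ^^ k) Y) = (commutator X ^^ k) (P Y)"
    and "(br X ^^ k) Y - P ((br X ^^ k) Y) = (commutator X ^^ k) Y - P ((commutator X ^^ k) Y)"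
proof -
  have "X \<in> h" using lie_subalgebraD(2)[OF t] \<open>X \<in> t\<close> by blast
  have br_pow: "(br X ^^ k) Y \<in> h" for k
    using contraction_bracket_mem[OF h t c br \<open>X \<in> h\<close>] \<open>Y \<in> h\<close> by (rule funpow_mem)
  have ad_pow: "(commutator X ^^ k) Y \<in> h" for k
    using lie_subalgebraD(3)[OF h \<open>X \<in> h\<close>] \<open>Y \<in> h\<close> by (rule funpow_mem)
  have br_eq: "br X Z = contracted_commutator t tc X Z" if "Z \<in> h" for Z
    using contraction_bracket_eq[OF h t c br \<open>X \<in> h\<close> that] .
  note cc = contracted_commutator_subalgebra_left[OF h t c \<open>X \<in> t\<close>, folded P_def]
  note residual = proj_along_commutator_residual[OF h t c \<open>X \<in> t\<close>, folded P_def]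
  show "P ((br X ^^ k) Y) = (commutator X ^^ k) (P Y)"
    by (induction k) (simp_all add: br_eq br_pow cc(1))
  show "(br X ^^ k) Y - P ((br X ^^ k) Y) = (commutator X ^^ k) Y - P ((commutator X ^^ k) Y)"
  proof (induction k)
    case 0
    then show ?case by simp
  next
    case (Suc k)
    let ?Z = "(br X ^^ k) Y" and ?W = "(commutator X ^^ k) Y"
    have "(br X ^^ Suc k) Y - P ((br X ^^ Suc k) Y) = commutator X ?Z - P (commutator X ?Z)"
      using cc(2)[OF br_pow] by (simp add: br_eq br_pow)
    also have "\<dots> = commutator X (?Z - P ?Z) - P (commutator X (?Z - P ?Z))"
      using residual[OF br_pow] .
    also have "\<dots> = commutator X ?W - P (commutator X ?W)"
      using residual[OF ad_pow] Suc.IH by simp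
    finally show ?case by simp
  qed
qed

lemma funpow_commutator_eq_0_of_contraction_nilpotent:
  assumes h: "lie_subalgebra h UNIV" and t: "lie_subalgebra t h" and c: "complement_in tc t h"
    and br: "is_contraction_bracket h t tc br" and "X \<in> t"
    and nil: "\<And>Y. Y \<in> h \<Longrightarrow> (br X ^^ N) Y = 0" and "Y \<in> h"
  shows "(commutator X ^^ (N + N)) Y = 0"
proof -
  let ?P = "proj_along t tc" and ?Z = "(commutator X ^^ N) Y"
  note pow = proj_along_funpow_contraction_bracket[OF h t c br \<open>X \<in> t\<close>]
  note st = lie_subalgebraD(1)[OF t] and th = lie_subalgebraD(2)[OF t]
  have P0: "?P 0 = 0" using proj_along_id[OF st c] subspace_0[OF st] by blast
  have "?Z - ?P ?Z = 0" using pow(2)[OF \<open>Y \<in> h\<close>, of N] nil[OF \<open>Y \<in> h\<close>] P0 by simp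
  moreover have "?P ?Z \<in> t"
    using lie_subalgebraD(3)[OF h] \<open>X \<in> t\<close> th \<open>Y \<in> h\<close> proj_along_in(1)[OF st c]
      funpow_mem[of h "commutator X"]
    by blast
  then have "(commutator X ^^ N) (?P ?Z) = 0"
    using pow(1)[of "?P ?Z" N] nil proj_along_id[OF st c] P0 th by auto
  ultimately show ?thesis by (simp add: funpow_add)
qed

lemma skew_funpow_eq_0:
  fixes S :: "'a::real_inner \<Rightarrow> 'a"
  assumes skew: "\<And>u v. inner (S u) v = - inner u (S v)" and "(S ^^ k) u = 0"
  shows "S u = 0"
  using assms(2)
proof (induction k arbitrary: u)
  case 0
  then show ?case using skew[of 0 "S 0"] by simp
next
  case (Suc k)
  then have "(S ^^ k) (S u) = 0" by (simp only: funpow_Suc_right comp_apply)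
  then have "S (S u) = 0" by (rule Suc.IH)
  then show ?case using skew[of u "S u"] by simp
qed

lemma so_alg_center_trivial:
  fixes X :: "real^'n^'n"
  assumes card: "CARD('n) \<ge> 3" and "X \<in> so_alg"
    and central: "\<And>Y. Y \<in> so_alg \<Longrightarrow> commutator X Y = 0"
  shows "X = 0"
proof -
  have skew: "X $ j $ i = - X $ i $ j" for i j
  proof -
    have "transpose X $ i $ j = (- X) $ i $ j" using \<open>X \<in> so_alg\<close> by (simp add: so_alg_def)
    then show ?thesis by (simp add: transpose_def)
  qed
  have "X $ p $ q = 0" for p q
  proof (cases "p = q")
    case True
    then show ?thesis using skew[of p p] by simp
  next
    case False
    have "card {p, q} < CARD('n)" using card by (simp add: card_insert_if)
    then have "{p, q} \<noteq> UNIV" by auto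
    then obtain r where r: "r \<noteq> p" "r \<noteq> q" by blast
    define E :: "real^'n^'n"
      where "E = (\<chi> i j. if i = q \<and> j = r then 1 else if i = r \<and> j = q then -1 else 0)"
    have "E \<in> so_alg" unfolding so_alg_def E_def using r by (auto simp: transpose_def vec_eq_iff)
    have "(X ** E) $ p $ r = X $ p $ q"
      using r by (simp add: matrix_matrix_mult_def E_def if_distrib[of "times _"] cong: if_cong)
    moreover have "(E ** X) $ p $ r = 0"
      using r \<open>p \<noteq> q\<close> by (simp add: matrix_matrix_mult_def E_def)
    ultimately have "commutator X E $ p $ r = X $ p $ q" by (simp add: commutator_def)
    then show ?thesis using central[OF \<open>E \<in> so_alg\<close>] by simp
  qed
  then show ?thesis by (simp add: vec_eq_iff)
qed

definition position :: "'n::{finite,linorder} \<Rightarrow> nat" where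
  "position i = card {j. j < i}"

lemma position_strict_mono: "i < j \<Longrightarrow> position i < position j"
  unfolding position_def by (rule psubset_card_mono) auto

lemma position_less_card: "position (i :: 'n::{finite,linorder}) < CARD('n)"
  unfolding position_def by (rule psubset_card_mono) auto

definition lower_band :: "nat \<Rightarrow> (real^('n::{finite,linorder})^('n::{finite,linorder})) set" where
  "lower_band k = {A. \<forall>i j. position i < position j + k \<longrightarrow> A $ i $ j = 0}"

lemma slt_alg_subset_lower_band: "slt_alg \<subseteq> lower_band 1"
proof
  fix A :: "real^('n::{finite,linorder})^('n::{finite,linorder})"
  assume "A \<in> slt_alg"
  have "A $ i $ j = 0" if "position i < position j + 1" for i j
  proof -
    have "\<not> j < i" using that position_strict_mono[of j i] by linarith
    then show ?thesis using \<open>A \<in> slt_alg\<close> by (simp add: slt_alg_def)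
  qed
  then show "A \<in> lower_band 1" by (simp add: lower_band_def)
qed

lemma matrix_mult_lower_band:
  assumes "A \<in> lower_band a" "B \<in> lower_band b"
  shows "A ** B \<in> lower_band (a + b)"
proof -
  have "A $ i $ k * B $ k $ j = 0" if "position i < position j + (a + b)" for i j k
  proof (cases "position i < position k + a")
    case True
    then show ?thesis using assms(1) by (simp add: lower_band_def)
  next
    case False
    then show ?thesis using that assms(2) by (simp add: lower_band_def)
  qed
  then show ?thesis
    unfolding lower_band_def matrix_matrix_mult_def by (auto intro: sum.neutral)
qed

lemma lower_band_diff: "A \<in> lower_band k \<Longrightarrow> B \<in> lower_band k \<Longrightarrow> A - B \<in> lower_band k"
  by (simp add: lower_band_def)

lemma commutator_lower_band:
  assumes "A \<in> lower_band 1" "B \<in> lower_band k"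
  shows "commutator A B \<in> lower_band (Suc k)"
proof -
  have "A ** B \<in> lower_band (Suc k)" "B ** A \<in> lower_band (Suc k)"
    using matrix_mult_lower_band[OF assms] matrix_mult_lower_band[OF assms(2,1)] by simp_all
  then show ?thesis unfolding commutator_def by (rule lower_band_diff)
qed

lemma lower_band_card_eq_0:
  assumes "A \<in> lower_band CARD('n)"
  shows "A = (0 :: real^('n::{finite,linorder})^('n::{finite,linorder}))"
proof -
  have "A $ i $ j = 0" for i j
  proof -
    have "position i < position j + CARD('n)" using position_less_card[of i] by linarith
    then show ?thesis using assms by (simp add: lower_band_def)
  qed
  then show ?thesis by (simp add: vec_eq_iff)
qed

lemma slt_alg_funpow_commutator:
  fixes A B :: "real^('n::{finite,linorder})^('n::{finite,linorder})"
  assumes "A \<in> slt_alg" "B \<in> slt_alg"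
  shows "(commutator A ^^ (CARD('n) - 1)) B = 0"
proof -
  have "A \<in> lower_band 1" "B \<in> lower_band 1" using assms slt_alg_subset_lower_band by blast+
  have "(commutator A ^^ k) B \<in> lower_band (Suc k)" for k
  proof (induction k)
    case 0
    then show ?case using \<open>B \<in> lower_band 1\<close> by simp
  next
    case (Suc k)
    then show ?case using commutator_lower_band[OF \<open>A \<in> lower_band 1\<close>] by simp
  qed
  from this[of "CARD('n) - 1"] show ?thesis by (simp add: lower_band_card_eq_0)
qed

lemma slt_alg_not_abelian:
  assumes "CARD('n) \<ge> 3"
  obtains A B :: "real^('n::{finite,linorder})^('n::{finite,linorder})"
  where "A \<in> slt_alg" "B \<in> slt_alg" "commutator A B \<noteq> 0"
proof -
  let ?xs = "sorted_list_of_set (UNIV :: 'n set)"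
  define a b c where "a = ?xs ! 0" "b = ?xs ! 1" "c = ?xs ! 2"
  have "a < b" "b < c"
    using assms sorted_wrt_nth_less[OF strict_sorted_list_of_set[of "UNIV :: 'n set"]]
    by (simp_all add: a_b_c_def)
  define A where "A = (\<chi> i j. if i = c \<and> j = b then 1 else (0::real))"
  define B where "B = (\<chi> i j. if i = b \<and> j = a then 1 else (0::real))"
  have "A \<in> slt_alg" "B \<in> slt_alg"
    unfolding slt_alg_def A_def B_def using \<open>a < b\<close> \<open>b < c\<close> by auto
  moreover have "(A ** B) $ c $ a = 1"
    by (simp add: matrix_matrix_mult_def A_def B_def if_distrib[of "times _"] cong: if_cong)
  moreover have "(B ** A) $ c $ a = 0"
    using \<open>b < c\<close> by (simp add: matrix_matrix_mult_def B_def less_imp_neq[symmetric])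
  ultimately have "commutator A B $ c $ a = 1" by (simp add: commutator_def)
  then show ?thesis using that \<open>A \<in> slt_alg\<close> \<open>B \<in> slt_alg\<close> by force
qed

lemma lie_iso_onto_zero:
  assumes "lie_iso_onto h br g f" and "X \<in> h"
  shows "f 0 = 0"
proof -
  have "f (0 *\<^sub>R X + 0 *\<^sub>R X) = 0 *\<^sub>R f X + 0 *\<^sub>R f X"
    using assms unfolding lie_iso_onto_def by blast
  then show ?thesis by simp
qed

lemma lie_iso_onto_funpow:
  assumes f: "lie_iso_onto h br g f" and closed: "\<And>A B. A \<in> h \<Longrightarrow> B \<in> h \<Longrightarrow> br A B \<in> h"
    and "X \<in> h" "Y \<in> h"
  shows "f ((br X ^^ k) Y) = (commutator (f X) ^^ k) (f Y)"
proof (induction k)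
  case 0
  then show ?case by simp
next
  case (Suc k)
  have "(br X ^^ k) Y \<in> h" using closed \<open>X \<in> h\<close> \<open>Y \<in> h\<close> by (intro funpow_mem)
  then show ?case using f \<open>X \<in> h\<close> Suc.IH by (simp add: lie_iso_onto_def)
qed

lemma lie_iso_onto_abelian:
  assumes f: "lie_iso_onto h br g f" and br0: "\<And>X Y. X \<in> h \<Longrightarrow> Y \<in> h \<Longrightarrow> br X Y = 0"
    and "A \<in> g" "B \<in> g"
  shows "commutator A B = 0"
proof -
  obtain X Y where "X \<in> h" "Y \<in> h" "A = f X" "B = f Y"
    using f \<open>A \<in> g\<close> \<open>B \<in> g\<close> unfolding lie_iso_onto_def by blast
  then have "commutator A B = f (br X Y)" using f by (simp add: lie_iso_onto_def)
  also have "\<dots> = 0" using br0 lie_iso_onto_zero[OF f] \<open>X \<in> h\<close> \<open>Y \<in> h\<close> by simp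
  finally show ?thesis .
qed

lemma lie_iso_onto_funpow_eq_0:
  assumes f: "lie_iso_onto h br g f" and closed: "\<And>A B. A \<in> h \<Longrightarrow> B \<in> h \<Longrightarrow> br A B \<in> h"
    and "0 \<in> h" "X \<in> h" "Y \<in> h" and nil: "(commutator (f X) ^^ k) (f Y) = 0"
  shows "(br X ^^ k) Y = 0"
proof -
  have "f ((br X ^^ k) Y) = f 0"
    using lie_iso_onto_funpow[OF f closed \<open>X \<in> h\<close> \<open>Y \<in> h\<close>] nil lie_iso_onto_zero[OF f \<open>X \<in> h\<close>]
    by simp
  moreover have "(br X ^^ k) Y \<in> h" using closed \<open>X \<in> h\<close> \<open>Y \<in> h\<close> by (intro funpow_mem)
  moreover have "inj_on f h" using f by (simp add: lie_iso_onto_def)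
  ultimately show ?thesis using \<open>0 \<in> h\<close> by (auto dest: inj_onD)
qed

lemma contraction_iso_slt_alg_subalgebra_trivial:
  fixes t tc :: "(real^('n::{finite,linorder})^('n::{finite,linorder})) set"
  assumes card: "CARD('n) \<ge> 3" and t: "lie_subalgebra t so_alg" and c: "complement_in tc t so_alg"
    and br: "is_contraction_bracket so_alg t tc br" and f: "lie_iso_onto so_alg br slt_alg f"
  shows "t = {0}"
proof -
  let ?N = "CARD('n) - 1"
  note so = lie_subalgebra_so_alg
  have "0 \<in> so_alg" "0 \<in> t" using subspace_0 lie_subalgebraD(1) so t by blast+
  have "X = 0" if "X \<in> t" for X
  proof -
    have "X \<in> so_alg" using lie_subalgebraD(2)[OF t] \<open>X \<in> t\<close> by blast
    have "(br X ^^ ?N) Y = 0" if "Y \<in> so_alg" for Y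
    proof (rule lie_iso_onto_funpow_eq_0[OF f contraction_bracket_mem[OF so t c br]])
      have "f X \<in> slt_alg" "f Y \<in> slt_alg"
        using f \<open>X \<in> so_alg\<close> \<open>Y \<in> so_alg\<close> by (auto simp: lie_iso_onto_def)
      then show "(commutator (f X) ^^ ?N) (f Y) = 0" by (rule slt_alg_funpow_commutator)
    qed (use \<open>0 \<in> so_alg\<close> \<open>X \<in> so_alg\<close> that in auto)
    then have "(commutator X ^^ (?N + ?N)) Y = 0" if "Y \<in> so_alg" for Y
      using funpow_commutator_eq_0_of_contraction_nilpotent[OF so t c br \<open>X \<in> t\<close>] that by blast
    moreover have "inner (commutator X A) B = - inner A (commutator X B)" for A B
      using \<open>X \<in> so_alg\<close> inner_commutator_skew by (simp add: so_alg_def)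
    ultimately have "commutator X Y = 0" if "Y \<in> so_alg" for Y
      using skew_funpow_eq_0[where S = "commutator X"] that by blast
    then show "X = 0" using so_alg_center_trivial[OF card \<open>X \<in> so_alg\<close>] by blast
  qed
  then show ?thesis using \<open>0 \<in> t\<close> by blast
qed

theorem lemma2p5:
  fixes t tc :: "(real^('n::{finite,linorder})^('n::{finite,linorder})) set"
    and br :: "real^('n::{finite,linorder})^('n::{finite,linorder}) \<Rightarrow> real^('n::{finite,linorder})^('n::{finite,linorder}) \<Rightarrow> real^('n::{finite,linorder})^('n::{finite,linorder})"
  assumes "CARD('n) \<ge> 3"
    and "lie_subalgebra t so_alg"
    and "complement_in tc t so_alg"
    and "is_contraction_bracket so_alg t tc br"
  shows "\<not> (\<exists>f. lie_iso_onto so_alg br slt_alg f)"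
proof
  assume "\<exists>f. lie_iso_onto so_alg br slt_alg f"
  then obtain f where f: "lie_iso_onto so_alg br slt_alg f" ..
  have "t = {0}" using contraction_iso_slt_alg_subalgebra_trivial[OF assms f] .
  then have br0: "br X Y = 0" if "X \<in> so_alg" "Y \<in> so_alg" for X Y
    using contraction_bracket_eq[OF lie_subalgebra_so_alg assms(2-4) that]
      contracted_commutator_trivial assms(3) that by simp
  obtain A B :: "real^('n::{finite,linorder})^('n::{finite,linorder})"
    where "A \<in> slt_alg" "B \<in> slt_alg" "commutator A B \<noteq> 0"
    using slt_alg_not_abelian[OF assms(1)] .
  then show False using lie_iso_onto_abelian[OF f br0] by simp
qed

end
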